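(* For every $k\in[n]$ and every signaling scheme $\mathcal{Z}'$ for $\mathcal{D}$, \[\int_0^{F_{\mathcal{D}}(v_k)} s_{\mathcal{Z}'}(x)\,dx\ \le\ V_k-\max_{i\in[k]}\Big\{v_i\sum_{j=i}^k f_{\mathcal{D}}(v_j)\Big\},\qquad\text{where } V_k=\sum_{i=1}^k v_i f_{\mathcal{D}}(v_i).\]
   Context: Values and prior. $0<v_1<\dots<v_n$ are reals, and $v_0:=0$. $\mathcal{D}$ is a distribution on $\{v_1,\dots,v_n\}$ with $f_{\mathcal{D}}(v_i)>0$ and CDF $F_{\mathcal{D}}$. Signals and pricing. A signal is a distribution $S$ on these values, with $G_S(p)=\Pr_{v\sim S}[v\ge p]$. The seller posts $p^*_S$, the smallest $v$ in the support of $S$ maximizing $v\,G_S(v)$. The surplus of value $v$ is $cs_v(S)=\mathbb{1}[v\ge p^*_S](v-p^*_S)$. Signaling schemes. A signaling scheme is $\mathcal{Z}=\{(S_q,\gamma_q)\}_{q\in[Q]}$ with $\gamma_q\ge0$, $\sum\gamma_q=1$ and $\sum_q\gamma_q f_{S_q}=f_{\mathcal{D}}$. Its expected consumer surplus at $v_i$ is $cs_{v_i}(\mathcal{Z})=\sum_q cs_{v_i}(S_q)\gamma_q f_{S_q}(v_i)/f_{\mathcal{D}}(v_i)$. The surplus-mass function $s_{\mathcal{Z}}$ on $(0,1]$ equals $cs_{v_i}(\mathcal{Z})$ on $(F_{\mathcal{D}}(v_{i-1}),F_{\mathcal{D}}(v_i)]$. In particular, $\int_0^{F_{\mathcal{D}}(v_k)}s_{\mathcal{Z}}=\sum_{i\le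 k}f_{\mathcal{D}}(v_i)\,cs_{v_i}(\mathcal{Z})$. *)

theory Defs
  imports "HOL-Analysis.Analysis"
begin

text \<open>Values are v 1 < ... < v n (indices 1..n), v 0 = 0 is not used.
  Distributions on the values are represented by their mass functions on indices 1..n.\<close>

definition distr_on :: "nat \<Rightarrow> (nat \<Rightarrow> real) \<Rightarrow> bool" where
  "distr_on n g \<longleftrightarrow> (\<forall>i\<in>{1..n}. g i \<ge> 0) \<and> (\<Sum>i=1..n. g i) = 1"

definition Gs :: "nat \<Rightarrow> (nat \<Rightarrow> real) \<Rightarrow> (nat \<Rightarrow> real) \<Rightarrow> real \<Rightarrow> real" where
  "Gs n v g p = (\<Sum>j\<in>{1..n}. if v j \<ge> p then g j else 0)"

definition supp_vals :: "nat \<Rightarrow> (nat \<Rightarrow> real) \<Rightarrow> (nat \<Rightarrow> real) \<Rightarrow> real set" where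
  "supp_vals n v g = v ` {i\<in>{1..n}. g i > 0}"

definition price :: "nat \<Rightarrow> (nat \<Rightarrow> real) \<Rightarrow> (nat \<Rightarrow> real) \<Rightarrow> real" where
  "price n v g = (LEAST p. p \<in> supp_vals n v g \<and>
      (\<forall>q\<in>supp_vals n v g. q * Gs n v g q \<le> p * Gs n v g p))"

definition cs :: "nat \<Rightarrow> (nat \<Rightarrow> real) \<Rightarrow> (nat \<Rightarrow> real) \<Rightarrow> real \<Rightarrow> real" where
  "cs n v g x = (if x \<ge> price n v g then x - price n v g else 0)"

text \<open>A signaling scheme with Q signals: signal q has mass function S q and weight \<gamma> q.\<close>
definition is_scheme :: "nat \<Rightarrow> (nat \<Rightarrow> real) \<Rightarrow> nat \<Rightarrow> (nat \<Rightarrow> nat \<Rightarrow> real) \<Rightarrow> (nat \<Rightarrow> real) \<Rightarrow> bool" where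
  "is_scheme n f Q S \<gamma> \<longleftrightarrow> (\<forall>q<Q. distr_on n (S q) \<and> \<gamma> q \<ge> 0) \<and> (\<Sum>q<Q. \<gamma> q) = 1 \<and>
     (\<forall>i\<in>{1..n}. (\<Sum>q<Q. \<gamma> q * S q i) = f i)"

definition cs_scheme :: "nat \<Rightarrow> (nat \<Rightarrow> real) \<Rightarrow> (nat \<Rightarrow> real) \<Rightarrow> nat \<Rightarrow> (nat \<Rightarrow> nat \<Rightarrow> real) \<Rightarrow> (nat \<Rightarrow> real) \<Rightarrow> nat \<Rightarrow> real" where
  "cs_scheme n v f Q S \<gamma> i = (\<Sum>q<Q. cs n v (S q) (v i) * \<gamma> q * S q i / f i)"

definition cdf :: "(nat \<Rightarrow> real) \<Rightarrow> nat \<Rightarrow> real" where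
  "cdf f i = (\<Sum>j=1..i. f j)"

text \<open>surplus-mass function on (0,1]: equals cs_{v_i}(Z) on (F(v_{i-1}), F(v_i)] (0 elsewhere)\<close>
definition smass :: "nat \<Rightarrow> (nat \<Rightarrow> real) \<Rightarrow> (nat \<Rightarrow> real) \<Rightarrow> nat \<Rightarrow> (nat \<Rightarrow> nat \<Rightarrow> real) \<Rightarrow> (nat \<Rightarrow> real) \<Rightarrow> real \<Rightarrow> real" where
  "smass n v f Q S \<gamma> x = (\<Sum>i=1..n. if cdf f (i - 1) < x \<and> x \<le> cdf f i then cs_scheme n v f Q S \<gamma> i else 0)"

end

theory Submission
  imports Defs
begin

text \<open>Fix a signal with posted price p. The surplus of value v_i is v_i - min(v_i, p), so
  the surplus of the types 1..k is V_k minus the mass-weighted sum of min(v_i, p) over i \<le> k.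
  That sum is at least v_a times the mass of the types a..k: trivially if v_a \<le> p, and
  otherwise because the revenue of p, which is at most that sum plus p times the mass above
  v_k, dominates the revenue v_a times the mass above v_a of posting v_a. The bound is linear
  in the signal, so it survives averaging over the signals of a scheme, and the integral of
  s_Z up to F(v_k) is exactly the f-weighted surplus of the types 1..k.\<close>

lemma sum_atLeastAtMost_split:
  fixes g :: "nat \<Rightarrow> 'a::comm_monoid_add"
  assumes "m \<le> k + 1" "k \<le> n"
  shows "sum g {m..n} = sum g {m..k} + sum g {k+1..n}"
  using sum.ub_add_nat[of m k g "n - k"] assms by simp

lemma supp_vals_nonempty:
  assumes "distr_on n g"
  shows "supp_vals n v g \<noteq> {}"
proof
  assume "supp_vals n v g = {}"
  then have "\<forall>i\<in>{1..n}. g i \<le> 0"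
    unfolding supp_vals_def by (auto simp: not_less)
  then have "(\<Sum>i=1..n. g i) \<le> 0" by (auto intro: sum_nonpos)
  with assms show False unfolding distr_on_def by simp
qed

lemma
  assumes "supp_vals n v g \<noteq> {}"
  shows price_in_supp_vals: "price n v g \<in> supp_vals n v g"
    and price_revenue_optimal:
      "q \<in> supp_vals n v g \<Longrightarrow> q * Gs n v g q \<le> price n v g * Gs n v g (price n v g)"
proof -
  let ?A = "supp_vals n v g"
  let ?h = "\<lambda>q. q * Gs n v g q"
  let ?P = "\<lambda>p. p \<in> ?A \<and> (\<forall>q\<in>?A. ?h q \<le> ?h p)"
  have finA: "finite ?A" unfolding supp_vals_def by simp
  have "Max (?h ` ?A) \<in> ?h ` ?A" using finA assms by simp
  then obtain p0 where max_p0: "Max (?h ` ?A) = ?h p0" and "p0 \<in> ?A" by (rule imageE)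
  have "?P p0"
  proof (intro conjI ballI)
    fix q assume "q \<in> ?A"
    then have "?h q \<le> Max (?h ` ?A)" using finA by simp
    then show "?h q \<le> ?h p0" unfolding max_p0 .
  qed fact
  have finP: "finite {p. ?P p}" by (rule finite_subset[OF _ finA]) auto
  have "price n v g = Min {p. ?P p}"
    unfolding price_def by (rule Least_Min[OF finP]) (use \<open>?P p0\<close> in blast)
  moreover have "{p. ?P p} \<noteq> {}" using \<open>?P p0\<close> by blast
  ultimately have "?P (price n v g)" using Min_in[OF finP] by simp
  then show "price n v g \<in> ?A"
    and "q \<in> ?A \<Longrightarrow> q * Gs n v g q \<le> price n v g * Gs n v g (price n v g)" by auto
qed

lemma price_nonneg:
  assumes "\<forall>i\<in>{1..n}. 0 \<le> v i" and "distr_on n g"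
  shows "0 \<le> price n v g"
  using price_in_supp_vals[OF supp_vals_nonempty[OF assms(2), of v]] assms(1)
  unfolding supp_vals_def by auto

lemma Gs_nonneg:
  assumes "\<forall>i\<in>{1..n}. 0 \<le> g i"
  shows "0 \<le> Gs n v g t"
  unfolding Gs_def using assms by (intro sum_nonneg) auto

lemma revenue_le_price_revenue:
  assumes v: "\<forall>i\<in>{1..n}. 0 \<le> v i" and g: "distr_on n g"
  shows "t * Gs n v g t \<le> price n v g * Gs n v g (price n v g)"
proof -
  let ?A = "supp_vals n v g"
  let ?U = "{q\<in>?A. t \<le> q}"
  have gnn: "\<forall>i\<in>{1..n}. 0 \<le> g i" using g unfolding distr_on_def by simp
  have opt_nonneg: "0 \<le> price n v g * Gs n v g (price n v g)"
    using price_nonneg[OF v g] Gs_nonneg[OF gnn] by simp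
  show ?thesis
  proof (cases "?U = {}")
    case True
    have "Gs n v g t = 0"
      unfolding Gs_def
    proof (intro sum.neutral ballI)
      fix j assume j: "j \<in> {1..n}"
      have "\<not> (t \<le> v j \<and> 0 < g j)"
        using True j unfolding supp_vals_def by auto
      with gnn j show "(if t \<le> v j then g j else 0) = 0" by force
    qed
    with opt_nonneg show ?thesis by simp
  next
    case False
    define q where "q = Min ?U"
    have finU: "finite ?U" unfolding supp_vals_def by simp
    have q: "q \<in> ?A" "t \<le> q" using Min_in[OF finU False] unfolding q_def by auto
    \<comment> \<open>Between t and the next support value q there is no mass.\<close>
    have "Gs n v g t = Gs n v g q"
      unfolding Gs_def
    proof (rule sum.cong[OF refl])
      fix j assume j: "j \<in> {1..n}"
      show "(if t \<le> v j then g j else 0) = (if q \<le> v j then g j else 0)"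
      proof (cases "0 < g j")
        case True
        then have "v j \<in> ?A" using j unfolding supp_vals_def by auto
        then have "t \<le> v j \<longleftrightarrow> q \<le> v j" using q finU unfolding q_def by auto
        then show ?thesis by simp
      next
        case False
        with gnn j have "g j = 0" by force
        then show ?thesis by simp
      qed
    qed
    then have "t * Gs n v g t \<le> q * Gs n v g q"
      using q(2) Gs_nonneg[OF gnn] by (simp add: mult_right_mono)
    also have "\<dots> \<le> price n v g * Gs n v g (price n v g)"
      by (rule price_revenue_optimal[OF supp_vals_nonempty[OF g] q(1)])
    finally show ?thesis .
  qed
qed

lemma revenue_le_sum_min:
  assumes "\<forall>i\<in>{1..n}. 0 \<le> v i" "\<forall>i\<in>{1..n}. 0 \<le> g i" "0 \<le> t"
  shows "t * Gs n v g t \<le> (\<Sum>i=1..n. g i * min (v i) t)"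
  unfolding Gs_def sum_distrib_left
  using assms by (intro sum_mono) (auto simp: min_def)

lemma sum_tail_le_Gs:
  assumes mono: "mono_on {1..n} v" and gnn: "\<forall>i\<in>{1..n}. 0 \<le> g i" and a: "a \<in> {1..n}"
  shows "(\<Sum>j=a..n. g j) \<le> Gs n v g (v a)"
proof -
  have "(\<Sum>j=a..n. g j) = (\<Sum>j=a..n. if v a \<le> v j then g j else 0)"
    using a by (intro sum.cong[OF refl]) (auto intro: mono_onD[OF mono])
  also have "\<dots> \<le> Gs n v g (v a)"
    unfolding Gs_def using a gnn by (intro sum_mono2) auto
  finally show ?thesis .
qed

lemma tail_revenue_le_sum_min_price:
  assumes v: "\<forall>i\<in>{1..n}. 0 \<le> v i" and mono: "mono_on {1..n} v" and g: "distr_on n g"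
    and a: "a \<in> {1..k}" and k: "k \<le> n"
  shows "v a * (\<Sum>j=a..k. g j) \<le> (\<Sum>i=1..k. g i * min (v i) (price n v g))"
proof -
  define p where "p = price n v g"
  have gnn: "\<forall>i\<in>{1..n}. 0 \<le> g i" using g unfolding distr_on_def by simp
  have p: "0 \<le> p" unfolding p_def using price_nonneg[OF v g] .
  have va_le: "v a \<le> v j" if "j \<in> {a..n}" for j
    using that a k by (intro mono_onD[OF mono]) auto
  show ?thesis
  proof (cases "v a \<le> p")
    case True
    have "v a * (\<Sum>j=a..k. g j) \<le> (\<Sum>j=a..k. g j * min (v j) p)"
      unfolding sum_distrib_left using True a k gnn va_le
      by (intro sum_mono) (simp add: mult.commute mult_left_mono)
    also have "\<dots> \<le> (\<Sum>i=1..k. g i * min (v i) p)"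
      using a k gnn v p by (intro sum_mono2) auto
    finally show ?thesis unfolding p_def .
  next
    case False
    define T where "T = (\<Sum>j=k+1..n. g j)"
    have "0 \<le> T" unfolding T_def using gnn by (intro sum_nonneg) auto
    have "v a * (\<Sum>j=a..k. g j) + v a * T = v a * (\<Sum>j=a..n. g j)"
      unfolding T_def using a k by (simp add: sum_atLeastAtMost_split[of a k n] algebra_simps)
    also have "\<dots> \<le> v a * Gs n v g (v a)"
      using sum_tail_le_Gs[OF mono gnn, of a] a k v by (intro mult_left_mono) auto
    also have "\<dots> \<le> p * Gs n v g p"
      unfolding p_def by (rule revenue_le_price_revenue[OF v g])
    also have "\<dots> \<le> (\<Sum>i=1..n. g i * min (v i) p)"
      by (rule revenue_le_sum_min[OF v gnn p])
    also have "\<dots> = (\<Sum>i=1..k. g i * min (v i) p) + p * T"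
    proof -
      have "(\<Sum>i=k+1..n. g i * min (v i) p) = (\<Sum>i=k+1..n. g i * p)"
      proof (rule sum.cong[OF refl])
        fix i assume "i \<in> {k+1..n}"
        then have "p < v i" using False a va_le[of i] by simp
        then show "g i * min (v i) p = g i * p" by simp
      qed
      then show ?thesis
        using sum_atLeastAtMost_split[of 1 k n "\<lambda>i. g i * min (v i) p"] k
        unfolding T_def sum_distrib_left by (simp add: mult.commute)
    qed
    finally show ?thesis
      using False \<open>0 \<le> T\<close> mult_right_mono[of p "v a" T] unfolding p_def by linarith
  qed
qed

lemma value_minus_cs: "x - cs n v g x = min x (price n v g)"
  unfolding cs_def by auto

lemma signal_surplus_bound:
  assumes "\<forall>i\<in>{1..n}. 0 \<le> v i" "mono_on {1..n} v" "distr_on n g" "a \<in> {1..k}" "k \<le> n"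
  shows "(\<Sum>i=1..k. g i * cs n v g (v i)) + v a * (\<Sum>j=a..k. g j) \<le> (\<Sum>i=1..k. v i * g i)"
proof -
  have "(\<Sum>i=1..k. v i * g i) - (\<Sum>i=1..k. g i * cs n v g (v i))
      = (\<Sum>i=1..k. g i * min (v i) (price n v g))"
    unfolding sum_subtractf[symmetric] value_minus_cs[symmetric]
    by (simp add: algebra_simps)
  with tail_revenue_le_sum_min_price[OF assms] show ?thesis by simp
qed

lemma mult_cs_scheme:
  assumes "f i \<noteq> 0"
  shows "f i * cs_scheme n v f Q S \<gamma> i = (\<Sum>q<Q. \<gamma> q * (S q i * cs n v (S q) (v i)))"
  unfolding cs_scheme_def sum_distrib_left using assms
  by (intro sum.cong[OF refl]) (simp add: field_simps)

lemma scheme_weighted_sum: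
  assumes "is_scheme n f Q S \<gamma>" and "I \<subseteq> {1..n}"
  shows "(\<Sum>i\<in>I. h i * f i) = (\<Sum>q<Q. \<gamma> q * (\<Sum>i\<in>I. h i * S q i))"
proof -
  have "(\<Sum>i\<in>I. h i * f i) = (\<Sum>i\<in>I. h i * (\<Sum>q<Q. \<gamma> q * S q i))"
    using assms unfolding is_scheme_def by (intro sum.cong[OF refl]) auto
  also have "\<dots> = (\<Sum>i\<in>I. \<Sum>q<Q. \<gamma> q * (h i * S q i))"
    by (simp add: sum_distrib_left mult.left_commute)
  also have "\<dots> = (\<Sum>q<Q. \<gamma> q * (\<Sum>i\<in>I. h i * S q i))"
    by (subst sum.swap) (simp add: sum_distrib_left)
  finally show ?thesis .
qed

lemma scheme_surplus_bound:
  assumes v: "\<forall>i\<in>{1..n}. 0 \<le> v i" and mono: "mono_on {1..n} v"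
    and f: "\<forall>i\<in>{1..n}. f i \<noteq> 0" and scheme: "is_scheme n f Q S \<gamma>"
    and a: "a \<in> {1..k}" and k: "k \<le> n"
  shows "(\<Sum>i=1..k. f i * cs_scheme n v f Q S \<gamma> i) + v a * (\<Sum>j=a..k. f j)
    \<le> (\<Sum>i=1..k. v i * f i)"
proof -
  let ?cs = "\<lambda>q. \<Sum>i=1..k. S q i * cs n v (S q) (v i)"
  have "(\<Sum>i=1..k. f i * cs_scheme n v f Q S \<gamma> i)
      = (\<Sum>i=1..k. \<Sum>q<Q. \<gamma> q * (S q i * cs n v (S q) (v i)))"
    using f k by (intro sum.cong[OF refl] mult_cs_scheme) auto
  also have "\<dots> = (\<Sum>q<Q. \<gamma> q * ?cs q)"
    by (subst sum.swap) (simp add: sum_distrib_left)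
  finally have surplus: "(\<Sum>i=1..k. f i * cs_scheme n v f Q S \<gamma> i) = (\<Sum>q<Q. \<gamma> q * ?cs q)" .
  have tail: "v a * (\<Sum>j=a..k. f j) = (\<Sum>q<Q. \<gamma> q * (v a * (\<Sum>j=a..k. S q j)))"
    using scheme_weighted_sum[OF scheme, of "{a..k}" "\<lambda>_. v a"] a k
    by (simp add: sum_distrib_left)
  have welfare: "(\<Sum>i=1..k. v i * f i) = (\<Sum>q<Q. \<gamma> q * (\<Sum>i=1..k. v i * S q i))"
    using scheme_weighted_sum[OF scheme, of "{1..k}" v] k by simp
  have "(\<Sum>q<Q. \<gamma> q * (?cs q + v a * (\<Sum>j=a..k. S q j)))
      \<le> (\<Sum>q<Q. \<gamma> q * (\<Sum>i=1..k. v i * S q i))"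
    using scheme signal_surplus_bound[OF v mono _ a k] unfolding is_scheme_def
    by (intro sum_mono mult_left_mono) auto
  then show ?thesis
    unfolding surplus tail welfare by (simp add: sum.distrib distrib_left)
qed

lemma has_integral_step_Ioc:
  fixes l a b c d :: real
  assumes "l \<le> a" "a \<le> b" "b \<le> c"
  shows "((\<lambda>x. if a < x \<and> x \<le> b then d else 0) has_integral (b - a) * d) {l..c}"
proof -
  have "{a..b} \<inter> {l..c} = {a..b}" using assms by auto
  then have "((\<lambda>x. d) has_integral (b - a) * d) ({a..b} \<inter> {l..c})"
    using has_integral_const_real[of d a b] assms by simp
  then have "((\<lambda>x. if x \<in> {a..b} then d else 0) has_integral (b - a) * d) {l..c}"
    by (subst has_integral_restrict_Int)
  then show ?thesis
    by (rule has_integral_spike[OF negligible_sing[of a], rotated]) auto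
qed

lemma cdf_mono:
  assumes "\<forall>i\<in>{1..n}. 0 \<le> f i" and "i \<le> j" and "j \<le> n"
  shows "cdf f i \<le> cdf f j"
proof -
  have "0 \<le> sum f {i+1..j}" using assms by (intro sum_nonneg) auto
  then show ?thesis using sum_atLeastAtMost_split[of 1 i j f] assms unfolding cdf_def by simp
qed

lemma cdf_diff:
  assumes "1 \<le> i"
  shows "cdf f i - cdf f (i - 1) = f i"
  using assms unfolding cdf_def by (cases i) auto

lemma has_integral_cdf_step:
  fixes c :: "nat \<Rightarrow> real"
  assumes f: "\<forall>i\<in>{1..n}. 0 \<le> f i" and k: "k \<le> n"
  shows "((\<lambda>x. \<Sum>i=1..n. if cdf f (i - 1) < x \<and> x \<le> cdf f i then c i else 0)
    has_integral (\<Sum>i=1..k. f i * c i)) {0..cdf f k}"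
proof -
  let ?step = "\<lambda>i x. if cdf f (i - 1) < x \<and> x \<le> cdf f i then c i else 0"
  have steps: "((\<lambda>x. \<Sum>i=1..k. ?step i x) has_integral
      (\<Sum>i=1..k. (cdf f i - cdf f (i - 1)) * c i)) {0..cdf f k}"
  proof (rule has_integral_sum)
    fix i assume i: "i \<in> {1..k}"
    have "cdf f 0 \<le> cdf f (i - 1)" "cdf f (i - 1) \<le> cdf f i" "cdf f i \<le> cdf f k"
      using i k by (auto intro: cdf_mono[OF f])
    then show "(?step i has_integral (cdf f i - cdf f (i - 1)) * c i) {0..cdf f k}"
      by (intro has_integral_step_Ioc) (simp_all add: cdf_def)
  qed simp
  have areas: "(\<Sum>i=1..k. (cdf f i - cdf f (i - 1)) * c i) = (\<Sum>i=1..k. f i * c i)"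
    using cdf_diff[of _ f] by (intro sum.cong[OF refl]) auto
  have high_steps_vanish: "?step i x = 0" if "x \<in> {0..cdf f k}" "i \<in> {k+1..n}" for i x
  proof -
    have "cdf f k \<le> cdf f (i - 1)" using that by (intro cdf_mono[OF f]) auto
    then show ?thesis using that by auto
  qed
  have "(\<Sum>i=1..k. ?step i x) = (\<Sum>i=1..n. ?step i x)" if "x \<in> {0..cdf f k}" for x
    using sum_atLeastAtMost_split[of 1 k n "\<lambda>i. ?step i x"] k high_steps_vanish[OF that]
    by simp
  with steps show ?thesis unfolding areas by (rule has_integral_eq[rotated])
qed

theorem lemma3:
  fixes n k Q :: nat and v f :: "nat \<Rightarrow> real" and S :: "nat \<Rightarrow> nat \<Rightarrow> real" and \<gamma> :: "nat \<Rightarrow> real"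
  assumes vpos: "0 < v 1"
    and vmono: "strict_mono_on {1..n} v"
    and fpos: "\<forall>i\<in>{1..n}. f i > 0"
    and fsum: "(\<Sum>i=1..n. f i) = 1"
    and scheme: "is_scheme n f Q S \<gamma>"
    and k: "k \<in> {1..n}"
  shows "integral {0..cdf f k} (smass n v f Q S \<gamma>)
     \<le> (\<Sum>i=1..k. v i * f i) - Max ((\<lambda>i. v i * (\<Sum>j=i..k. f j)) ` {1..k})"
proof -
  have mono: "mono_on {1..n} v" using vmono by (rule strict_mono_on_imp_mono_on)
  have v: "\<forall>i\<in>{1..n}. 0 \<le> v i" using vpos mono_onD[OF mono, of 1] by fastforce
  have f: "\<forall>i\<in>{1..n}. f i \<noteq> 0" using fpos by force
  have "integral {0..cdf f k} (smass n v f Q S \<gamma>) = (\<Sum>i=1..k. f i * cs_scheme n v f Q S \<gamma> i)"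
    unfolding smass_def using fpos k by (intro integral_unique has_integral_cdf_step) auto
  moreover have "Max ((\<lambda>i. v i * (\<Sum>j=i..k. f j)) ` {1..k})
      \<le> (\<Sum>i=1..k. v i * f i) - (\<Sum>i=1..k. f i * cs_scheme n v f Q S \<gamma> i)"
  proof (rule Max.boundedI)
    fix y assume "y \<in> (\<lambda>i. v i * (\<Sum>j=i..k. f j)) ` {1..k}"
    then obtain a where "a \<in> {1..k}" "y = v a * (\<Sum>j=a..k. f j)" by blast
    with scheme_surplus_bound[OF v mono f scheme] k
    show "y \<le> (\<Sum>i=1..k. v i * f i) - (\<Sum>i=1..k. f i * cs_scheme n v f Q S \<gamma> i)"
      by fastforce
  qed (use k in auto)
  ultimately show ?thesis by simp
qed

end
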